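(* Let $\Omega=\{x+iy\in\mathbb{C}: y>0,\ x^2+y^2<1\}$ and let $\Omega^c$ be the complement of its closure in the Riemann sphere. Let $g$ be the unique conformal map of the unit disk $\Delta$ onto $\Omega^c$ with $g(0)=\infty$ and Laurent expansion $g(z)=\kappa/z+c+O(z)$ at $0$ with $\kappa>0$. Then \[ \kappa=\frac{4}{3\sqrt3},\qquad c=\frac{2i}{3\sqrt3}. \]
   Context: $\Delta=\{z:|z|<1\}$. For a bounded simply connected domain $D$, the number $\kappa$ above is the outer radius (logarithmic capacity) of $D$ and $c$ is called the outer conformal center of $D$. *)

theory Defs
  imports "HOL-Analysis.Analysis" "HOL-Library.Landau_Symbols"
begin

definition upper_half_disk :: "complex set" where
  "upper_half_disk = {z. Im z > 0 \<and> (Re z)\<^sup>2 + (Im z)\<^sup>2 < 1}"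

end

theory Submission
  imports Defs "HOL-Complex_Analysis.Complex_Analysis" "HOL-Computational_Algebra.Polynomial"
begin

(* The map w \<mapsto> (1 + w) / (1 - w), a rotation by e^(3 pi i / 4), the power 2/3 and a Moebius
   map of the right half-plane compose to an explicit conformal bijection of the complement of the
   closed half disk onto the punctured unit disk, sending \<infinity> to 0. Composed with g it becomes
   an automorphism of the punctured disk which extends across 0, hence a rotation z \<mapsto> a z by the
   Schwarz lemma. Cleared of denominators, this identity is a polynomial relation between z and
   z g(z) = \<kappa> + c z + O(z\<^sup>2); its coefficients of z and z\<^sup>2 must vanish, and these two equations
   determine \<kappa>, a and c. *)

section \<open>The complement of the closed half disk\<close>

lemma closure_upper_half_disk:
  "closure upper_half_disk = {w. Im w \<ge> 0} \<inter> cball 0 1"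
proof -
  have halfplane: "{w. Im w > 0} = {w. \<i> \<bullet> w > 0}" "{w. Im w \<ge> 0} = {w. \<i> \<bullet> w \<ge> 0}"
    by (simp_all add: inner_complex_def)
  have "open {w. Im w > 0}"
    unfolding halfplane by (rule open_halfspace_gt)
  moreover have "\<i> / 2 \<in> {w. Im w > 0} \<inter> ball 0 1"
    by (simp add: norm_divide)
  ultimately have "rel_interior {w. Im w > 0} \<inter> rel_interior (ball 0 1) \<noteq> {}"
    by (simp only: rel_interior_open open_ball) blast
  then have "closure ({w. Im w > 0} \<inter> ball 0 1) = closure {w. Im w > 0} \<inter> closure (ball 0 1)"
    by (rule closure_Int_convex[OF convex_halfspace_Im_gt convex_ball])
  also have "closure {w. Im w > 0} = {w. Im w \<ge> 0}"
    unfolding halfplane by (rule closure_halfspace_gt) (rule complex_i_not_zero)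
  also have "{w. Im w > 0} \<inter> ball 0 1 = upper_half_disk"
    by (auto simp: upper_half_disk_def cmod_def)
  finally show ?thesis by simp
qed

definition half_disk_exterior :: "complex set" where
  "half_disk_exterior = {w. Im w < 0 \<or> 1 < cmod w}"

lemma compl_closure_upper_half_disk: "- closure upper_half_disk = half_disk_exterior"
  by (auto simp: closure_upper_half_disk half_disk_exterior_def)

lemma half_disk_exterior_neq_one: "w \<in> half_disk_exterior \<Longrightarrow> w \<noteq> 1"
  by (auto simp: half_disk_exterior_def)

definition cayley :: "complex \<Rightarrow> complex" where
  "cayley w = (1 + w) / (1 - w)"

definition cayley_inv :: "complex \<Rightarrow> complex" where
  "cayley_inv u = (u - 1) / (u + 1)"

lemma cayley_neq_minus_one: "cayley w \<noteq> -1"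
  by (cases "w = 1") (auto simp: cayley_def divide_eq_minus_1_iff)

lemma cayley_inv_neq_one: "cayley_inv u \<noteq> 1"
  by (cases "u = -1") (auto simp: cayley_inv_def add_eq_0_iff2)

lemma cayley_inv_cayley: "w \<noteq> 1 \<Longrightarrow> cayley_inv (cayley w) = w"
  by (simp add: cayley_def cayley_inv_def divide_simps)

lemma cayley_cayley_inv: "u \<noteq> -1 \<Longrightarrow> cayley (cayley_inv u) = u"
  by (simp add: cayley_def cayley_inv_def add_eq_0_iff2 divide_simps)

lemma holomorphic_cayley: "cayley holomorphic_on - {1}"
  unfolding cayley_def by (intro holomorphic_intros) auto

lemma mem_half_disk_exterior_iff_cayley:
  assumes "w \<noteq> 1"
  shows "w \<in> half_disk_exterior \<longleftrightarrow> Re (cayley w) < 0 \<or> Im (cayley w) < 0"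
proof -
  define d where "d = (Re (1 - w))\<^sup>2 + (Im (1 - w))\<^sup>2"
  have "d > 0"
    using assms by (simp add: d_def complex_eq_iff sum_power2_gt_zero_iff)
  moreover have "Re (cayley w) = (1 - ((Re w)\<^sup>2 + (Im w)\<^sup>2)) / d" "Im (cayley w) = 2 * Im w / d"
    by (simp_all add: cayley_def Re_divide Im_divide d_def algebra_simps power2_eq_square)
  moreover have "1 < cmod w \<longleftrightarrow> 1 < (Re w)\<^sup>2 + (Im w)\<^sup>2"
    by (simp add: cmod_def)
  ultimately show ?thesis
    by (auto simp: half_disk_exterior_def divide_less_0_iff)
qed

section \<open>Fractional powers on a sector\<close>

(* The sector |arg s| < 3 pi / 4. *)
definition wide_sector :: "complex set" where
  "wide_sector = {s. 0 < Re s + \<bar>Im s\<bar>}"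

lemma cos_plus_abs_sin_pos_iff:
  fixes q :: real
  assumes "-pi < q" "q \<le> pi"
  shows "0 < cos q + \<bar>sin q\<bar> \<longleftrightarrow> \<bar>q\<bar> < 3 * pi / 4"
proof -
  have "cos q + \<bar>sin q\<bar> = cos \<bar>q\<bar> + sin \<bar>q\<bar>"
    using assms sin_ge_zero[of q] sin_ge_zero[of "-q"] by (cases "q \<ge> 0") auto
  also have "\<dots> = sqrt 2 * sin (\<bar>q\<bar> + pi / 4)"
    by (simp add: sin_add sin_45 cos_45 algebra_simps)
  finally have eq: "cos q + \<bar>sin q\<bar> = sqrt 2 * sin (\<bar>q\<bar> + pi / 4)" .
  show ?thesis
  proof
    assume "0 < cos q + \<bar>sin q\<bar>"
    then have "0 < sin (\<bar>q\<bar> + pi / 4)"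
      by (simp add: eq zero_less_mult_iff)
    moreover have "\<bar>q\<bar> + pi / 4 < 2 * pi"
      using assms pi_gt_zero by arith
    ultimately show "\<bar>q\<bar> < 3 * pi / 4"
      using sin_le_zero[of "\<bar>q\<bar> + pi / 4"] by (cases "pi \<le> \<bar>q\<bar> + pi / 4") auto
  next
    assume "\<bar>q\<bar> < 3 * pi / 4"
    then show "0 < cos q + \<bar>sin q\<bar>"
      unfolding eq by (intro mult_pos_pos sin_gt_zero) auto
  qed
qed

lemma mem_wide_sector_iff_Ln:
  "s \<in> wide_sector \<longleftrightarrow> s \<noteq> 0 \<and> \<bar>Im (Ln s)\<bar> < 3 * pi / 4"
proof (cases "s = 0")
  case False
  define r q where "r = Re (Ln s)" and "q = Im (Ln s)"
  have "Re s = exp r * cos q" "Im s = exp r * sin q"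
    using Re_exp[of "Ln s"] Im_exp[of "Ln s"] False by (simp_all add: r_def q_def)
  then have "Re s + \<bar>Im s\<bar> = exp r * (cos q + \<bar>sin q\<bar>)"
    by (simp add: abs_mult distrib_left)
  then show ?thesis
    using False cos_plus_abs_sin_pos_iff[OF mpi_less_Im_Ln Im_Ln_le_pi]
    by (simp add: wide_sector_def zero_less_mult_iff q_def)
qed (simp add: wide_sector_def)

lemma wide_sector_Im_Ln_bounds:
  assumes "s \<in> wide_sector"
  shows "s \<noteq> 0" "\<bar>Im (Ln s)\<bar> < 3 * pi / 4"
  using assms by (simp_all add: mem_wide_sector_iff_Ln)

lemma wide_sector_not_nonpos_Reals: "s \<in> wide_sector \<Longrightarrow> s \<notin> \<real>\<^sub>\<le>\<^sub>0"
  by (auto simp: wide_sector_def nonpos_Reals_def complex_is_Real_iff)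

lemma Ln_powr:
  fixes z a :: complex
  assumes "z \<noteq> 0" "-pi < Im (a * Ln z)" "Im (a * Ln z) \<le> pi"
  shows "Ln (z powr a) = a * Ln z"
  using assms by (simp add: powr_def mult.commute)

lemma powr_powr_complex:
  fixes z a b :: complex
  assumes "z \<noteq> 0" "-pi < Im (a * Ln z)" "Im (a * Ln z) \<le> pi"
  shows "(z powr a) powr b = z powr (a * b)"
  using assms by (simp add: powr_def Ln_powr mult_ac)

lemma Re_powr_two_thirds_pos:
  assumes "s \<in> wide_sector"
  shows "0 < Re (s powr (2 / 3))"
proof -
  have "0 < cos (2 / 3 * Im (Ln s))"
    using wide_sector_Im_Ln_bounds[OF assms] by (intro cos_gt_zero_pi) auto
  then show ?thesis
    using wide_sector_Im_Ln_bounds(1)[OF assms] by (simp add: powr_def Re_exp)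
qed

lemma powr_three_halves_mem_wide_sector:
  assumes "0 < Re t"
  shows "t powr (3 / 2) \<in> wide_sector"
proof -
  have "\<bar>Im (Ln t)\<bar> < pi / 2"
    using assms by (rule Re_Ln_pos_lt_imp)
  moreover have "t \<noteq> 0"
    using assms by auto
  ultimately show ?thesis
    by (simp add: mem_wide_sector_iff_Ln Ln_powr powr_def)
qed

lemma powr_three_halves_powr_two_thirds:
  assumes "s \<in> wide_sector"
  shows "(s powr (2 / 3)) powr (3 / 2) = s"
  using wide_sector_Im_Ln_bounds[OF assms] by (simp add: powr_powr_complex)

lemma powr_two_thirds_powr_three_halves:
  assumes "0 < Re t"
  shows "(t powr (3 / 2)) powr (2 / 3) = t"
proof -
  have "\<bar>Im (Ln t)\<bar> < pi / 2" "t \<noteq> 0"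
    using assms Re_Ln_pos_lt_imp by auto
  then show ?thesis
    by (simp add: powr_powr_complex)
qed

lemma powr_two_thirds_cube: "(s powr (2 / 3)) ^ 3 = (s :: complex) ^ 2"
proof (cases "s = 0")
  case False
  have "(s powr (2 / 3)) ^ 3 = exp (of_nat 3 * (2 / 3 * Ln s))"
    using False by (simp only: powr_def exp_of_nat_mult if_False)
  also have "\<dots> = exp (Ln s) ^ 2"
    by (simp flip: exp_of_nat_mult)
  finally show ?thesis
    using False by simp
qed simp

section \<open>Moebius maps between the right half-plane and the disk\<close>

definition halfplane_to_disk :: "complex \<Rightarrow> complex \<Rightarrow> complex" where
  "halfplane_to_disk p t = (t - p) / (t + cnj p)"

definition disk_to_halfplane :: "complex \<Rightarrow> complex \<Rightarrow> complex" where
  "disk_to_halfplane p y = (p + cnj p * y) / (1 - y)"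

lemma halfplane_denominator_nonzero: "0 < Re p \<Longrightarrow> 0 < Re t \<Longrightarrow> t + cnj p \<noteq> 0"
  by (auto simp: complex_eq_iff)

lemma norm_halfplane_to_disk_less_1:
  assumes "0 < Re p" "0 < Re t"
  shows "cmod (halfplane_to_disk p t) < 1"
proof -
  have "(cmod (t - p))\<^sup>2 + 4 * Re p * Re t = (cmod (t + cnj p))\<^sup>2"
    unfolding cmod_power2 by (simp add: power2_eq_square algebra_simps)
  moreover have "0 < 4 * Re p * Re t"
    using assms by simp
  ultimately have "(cmod (t - p))\<^sup>2 < (cmod (t + cnj p))\<^sup>2"
    by linarith
  then have "cmod (t - p) < cmod (t + cnj p)"
    by (rule power2_less_imp_less) simp
  then show ?thesis
    by (simp add: halfplane_to_disk_def norm_divide divide_less_eq_1)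
qed

lemma Re_disk_to_halfplane_pos:
  assumes "0 < Re p" "cmod y < 1"
  shows "0 < Re (disk_to_halfplane p y)"
proof -
  have "Re ((p + cnj p * y) * cnj (1 - y)) = Re p * (1 - (cmod y)\<^sup>2)"
    unfolding cmod_power2 by (simp add: power2_eq_square algebra_simps)
  moreover have "(cmod y)\<^sup>2 < 1"
    using assms(2) by (simp add: power_less_one_iff)
  ultimately show ?thesis
    using assms(1) by (simp add: disk_to_halfplane_def Re_complex_div_gt_0)
qed

lemma halfplane_to_disk_inverse:
  assumes "Re p \<noteq> 0" "y \<noteq> 1"
  shows "halfplane_to_disk p (disk_to_halfplane p y) = y"
proof -
  have "1 - y \<noteq> 0" "p + cnj p \<noteq> 0"
    using assms by (simp_all add: complex_eq_iff)
  moreover have "disk_to_halfplane p y - p = (p + cnj p) * y / (1 - y)"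
    "disk_to_halfplane p y + cnj p = (p + cnj p) / (1 - y)"
    using \<open>1 - y \<noteq> 0\<close> by (simp_all add: disk_to_halfplane_def field_simps)
  ultimately show ?thesis
    by (simp add: halfplane_to_disk_def)
qed

lemma disk_to_halfplane_inverse:
  assumes "Re p \<noteq> 0" "t + cnj p \<noteq> 0"
  shows "disk_to_halfplane p (halfplane_to_disk p t) = t"
proof -
  have "p + cnj p \<noteq> 0"
    using assms(1) by (simp add: complex_eq_iff)
  moreover have "1 - halfplane_to_disk p t = (p + cnj p) / (t + cnj p)"
    "p + cnj p * halfplane_to_disk p t = (p + cnj p) * t / (t + cnj p)"
    using assms(2) by (simp_all add: halfplane_to_disk_def field_simps)
  ultimately show ?thesis
    using assms(2) by (simp add: disk_to_halfplane_def)
qed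

lemma halfplane_to_disk_eq_0_iff: "t + cnj p \<noteq> 0 \<Longrightarrow> halfplane_to_disk p t = 0 \<longleftrightarrow> t = p"
  by (simp add: halfplane_to_disk_def)

section \<open>A conformal map onto the punctured disk\<close>

(* rho = e^(3 pi i / 4) turns the three quadrants {Re u < 0 \<or> Im u < 0} into the sector, and
   tau0 = e^(- pi i / 6) = (- rho) powr (2 / 3) is where the point at infinity (cayley = -1) ends up. *)
definition rho :: complex where
  "rho = Complex (- (sqrt 2 / 2)) (sqrt 2 / 2)"

definition tau0 :: complex where
  "tau0 = Complex (sqrt 3 / 2) (- 1 / 2)"

lemma rho_nonzero: "rho \<noteq> 0"
  by (simp add: rho_def complex_eq_iff)

lemma rho_squared: "rho ^ 2 = - \<i>"
  by (simp add: rho_def complex_eq_iff power2_eq_square)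

lemma rho_mult_mem_wide_sector_iff: "rho * u \<in> wide_sector \<longleftrightarrow> Re u < 0 \<or> Im u < 0"
proof -
  have coordinates: "Re (rho * u) = sqrt 2 / 2 * (- Re u - Im u)" "Im (rho * u) = sqrt 2 / 2 * (Re u - Im u)"
    by (simp_all add: rho_def algebra_simps)
  have "Re (rho * u) + \<bar>Im (rho * u)\<bar> = sqrt 2 / 2 * (\<bar>Re u - Im u\<bar> - (Re u + Im u))"
    unfolding coordinates abs_mult by (simp add: field_simps)
  then have "rho * u \<in> wide_sector \<longleftrightarrow> Re u + Im u < \<bar>Re u - Im u\<bar>"
    unfolding wide_sector_def mem_Collect_eq by (metis diff_gt_0_iff_gt zero_less_mult_iff
      half_gt_zero_iff real_sqrt_gt_0_iff zero_less_numeral less_asym)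
  then show ?thesis
    by (auto simp: abs_if)
qed

lemma minus_rho_eq_exp: "- rho = exp (Complex 0 (- (pi / 4)))"
  by (simp add: rho_def complex_eq_iff Re_exp Im_exp cos_45 sin_45)

lemma tau0_eq_exp: "tau0 = exp (Complex 0 (- (pi / 6)))"
  by (simp add: tau0_def complex_eq_iff Re_exp Im_exp cos_30 sin_30)

lemma Ln_exp_imaginary: "- pi < x \<Longrightarrow> x \<le> pi \<Longrightarrow> Ln (exp (Complex 0 x)) = Complex 0 x"
  by (intro Ln_exp) auto

lemma minus_rho_powr_two_thirds: "(- rho) powr (2 / 3) = tau0"
proof -
  have "Ln (- rho) = Complex 0 (- (pi / 4))"
    unfolding minus_rho_eq_exp using pi_gt_zero by (intro Ln_exp_imaginary) linarith+
  moreover have "2 / 3 * Complex 0 (- (pi / 4)) = Complex 0 (- (pi / 6))"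
    by (simp add: complex_eq_iff)
  ultimately show ?thesis
    using rho_nonzero by (simp add: powr_def tau0_eq_exp)
qed

lemma tau0_powr_three_halves: "tau0 powr (3 / 2) = - rho"
proof -
  have "Ln tau0 = Complex 0 (- (pi / 6))"
    unfolding tau0_eq_exp using pi_gt_zero by (intro Ln_exp_imaginary) linarith+
  moreover have "3 / 2 * Complex 0 (- (pi / 6)) = Complex 0 (- (pi / 4))"
    by (simp add: complex_eq_iff)
  moreover have "tau0 \<noteq> 0"
    by (simp add: tau0_eq_exp)
  ultimately show ?thesis
    by (simp add: powr_def minus_rho_eq_exp)
qed

lemma Re_tau0_pos: "0 < Re tau0"
  by (simp add: tau0_def)

lemma tau0_mult_cnj: "tau0 * cnj tau0 = 1"
  by (simp add: tau0_def complex_eq_iff)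

lemma tau0_cube: "tau0 ^ 3 = - \<i>"
proof -
  have "of_nat 3 * Complex 0 (- (pi / 6)) = Complex 0 (- (pi / 2))"
    by (simp add: complex_eq_iff)
  then have "tau0 ^ 3 = exp (Complex 0 (- (pi / 2)))"
    unfolding tau0_eq_exp by (simp only: flip: exp_of_nat_mult)
  also have "\<dots> = - \<i>"
    by (simp add: complex_eq_iff Re_exp Im_exp)
  finally show ?thesis .
qed

definition exterior_to_disk :: "complex \<Rightarrow> complex" where
  "exterior_to_disk w = halfplane_to_disk tau0 ((rho * cayley w) powr (2 / 3))"

definition disk_to_exterior :: "complex \<Rightarrow> complex" where
  "disk_to_exterior y = cayley_inv (disk_to_halfplane tau0 y powr (3 / 2) / rho)"

lemma rho_cayley_mem_wide_sector: "w \<in> half_disk_exterior \<Longrightarrow> rho * cayley w \<in> wide_sector"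
  using mem_half_disk_exterior_iff_cayley half_disk_exterior_neq_one rho_mult_mem_wide_sector_iff
  by blast

lemma exterior_to_disk_mem:
  assumes "w \<in> half_disk_exterior"
  shows "exterior_to_disk w \<in> ball 0 1 - {0}"
proof -
  define s where "s = rho * cayley w"
  have s: "s \<in> wide_sector"
    using assms by (simp add: s_def rho_cayley_mem_wide_sector)
  then have pos: "0 < Re (s powr (2 / 3))"
    by (rule Re_powr_two_thirds_pos)
  have "s \<noteq> - rho"
    using cayley_neq_minus_one rho_nonzero unfolding s_def
    by (metis mult.right_neutral mult_cancel_left mult_minus_right)
  then have "s powr (2 / 3) \<noteq> tau0"
    using powr_three_halves_powr_two_thirds[OF s] tau0_powr_three_halves by metis
  then show ?thesis
    using pos norm_halfplane_to_disk_less_1[OF Re_tau0_pos pos]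
      halfplane_to_disk_eq_0_iff[OF halfplane_denominator_nonzero[OF Re_tau0_pos pos]]
    by (simp add: exterior_to_disk_def s_def)
qed

lemma disk_to_exterior_mem_and_inverse:
  assumes "y \<in> ball 0 1 - {0}"
  shows "disk_to_exterior y \<in> half_disk_exterior" "exterior_to_disk (disk_to_exterior y) = y"
proof -
  define t where "t = disk_to_halfplane tau0 y"
  have y: "cmod y < 1" "y \<noteq> 0" "y \<noteq> 1"
    using assms by auto
  have t: "0 < Re t"
    unfolding t_def using Re_tau0_pos y(1) by (rule Re_disk_to_halfplane_pos)
  define u where "u = t powr (3 / 2) / rho"
  have rho_u: "rho * u = t powr (3 / 2)"
    using rho_nonzero by (simp add: u_def)
  have "u \<noteq> -1"
  proof
    assume "u = -1"
    then have "t = tau0"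
      using rho_u powr_two_thirds_powr_three_halves[OF t] minus_rho_powr_two_thirds by auto
    then have "y = halfplane_to_disk tau0 tau0"
      using halfplane_to_disk_inverse[of tau0 y] Re_tau0_pos y(3) by (simp add: t_def)
    with y(2) show False
      by (simp add: halfplane_to_disk_def)
  qed
  then have cayley_u: "cayley (disk_to_exterior y) = u"
    by (simp add: disk_to_exterior_def cayley_cayley_inv u_def t_def)
  have "rho * u \<in> wide_sector"
    using powr_three_halves_mem_wide_sector[OF t] by (simp add: rho_u)
  then have "Re u < 0 \<or> Im u < 0"
    by (simp add: rho_mult_mem_wide_sector_iff)
  then show "disk_to_exterior y \<in> half_disk_exterior"
    using mem_half_disk_exterior_iff_cayley[of "disk_to_exterior y"] cayley_u
    by (simp add: disk_to_exterior_def cayley_inv_neq_one)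
  have "exterior_to_disk (disk_to_exterior y) = halfplane_to_disk tau0 t"
    by (simp add: exterior_to_disk_def cayley_u rho_u powr_two_thirds_powr_three_halves[OF t])
  also have "\<dots> = y"
    using halfplane_to_disk_inverse[of tau0 y] Re_tau0_pos y(3) by (simp add: t_def)
  finally show "exterior_to_disk (disk_to_exterior y) = y" .
qed

lemma disk_to_halfplane_exterior_to_disk:
  assumes "w \<in> half_disk_exterior"
  shows "disk_to_halfplane tau0 (exterior_to_disk w) = (rho * cayley w) powr (2 / 3)"
  unfolding exterior_to_disk_def using Re_tau0_pos
  by (intro disk_to_halfplane_inverse halfplane_denominator_nonzero Re_powr_two_thirds_pos
      rho_cayley_mem_wide_sector assms) simp_all

lemma disk_to_exterior_exterior_to_disk:
  assumes "w \<in> half_disk_exterior"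
  shows "disk_to_exterior (exterior_to_disk w) = w"
  using cayley_inv_cayley[OF half_disk_exterior_neq_one[OF assms]] rho_nonzero
  by (simp add: disk_to_exterior_def disk_to_halfplane_exterior_to_disk assms
      powr_three_halves_powr_two_thirds rho_cayley_mem_wide_sector)

lemma bij_betw_exterior_to_disk:
  "bij_betw exterior_to_disk half_disk_exterior (ball 0 1 - {0})"
  using exterior_to_disk_mem disk_to_exterior_mem_and_inverse disk_to_exterior_exterior_to_disk
  by (intro bij_betwI[where g = disk_to_exterior] funcsetI) blast+

lemma holomorphic_exterior_to_disk: "exterior_to_disk holomorphic_on half_disk_exterior"
proof -
  have "cayley holomorphic_on half_disk_exterior"
    using half_disk_exterior_neq_one by (blast intro: holomorphic_on_subset[OF holomorphic_cayley])
  then have power: "(\<lambda>w. (rho * cayley w) powr (2 / 3)) holomorphic_on half_disk_exterior"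
    using rho_cayley_mem_wide_sector wide_sector_not_nonpos_Reals
    by (intro holomorphic_intros) auto
  have "halfplane_to_disk tau0 holomorphic_on {t. 0 < Re t}"
    unfolding halfplane_to_disk_def using halfplane_denominator_nonzero[OF Re_tau0_pos]
    by (intro holomorphic_intros) auto
  from holomorphic_on_compose_gen[OF power this]
  have "(halfplane_to_disk tau0 \<circ> (\<lambda>w. (rho * cayley w) powr (2 / 3))) holomorphic_on half_disk_exterior"
    using Re_powr_two_thirds_pos rho_cayley_mem_wide_sector by blast
  then show ?thesis
    unfolding exterior_to_disk_def [abs_def] o_def .
qed

lemma disk_to_halfplane_exterior_to_disk_cube:
  assumes "w \<in> half_disk_exterior"
  shows "disk_to_halfplane tau0 (exterior_to_disk w) ^ 3 = - \<i> * cayley w ^ 2"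
  by (simp add: disk_to_halfplane_exterior_to_disk assms powr_two_thirds_cube
      power_mult_distrib rho_squared)

lemma exterior_to_disk_tendsto_0:
  assumes "((\<lambda>x. cayley (f x)) \<longlongrightarrow> -1) F"
  shows "((\<lambda>x. exterior_to_disk (f x)) \<longlongrightarrow> 0) F"
proof -
  have "- rho \<in> wide_sector"
    by (simp add: rho_def wide_sector_def)
  then have "- rho \<notin> \<real>\<^sub>\<le>\<^sub>0"
    by (rule wide_sector_not_nonpos_Reals)
  moreover have "((\<lambda>x. rho * cayley (f x)) \<longlongrightarrow> - rho) F"
    using tendsto_mult[OF tendsto_const assms, of rho] by simp
  ultimately have "((\<lambda>x. (rho * cayley (f x)) powr (2 / 3)) \<longlongrightarrow> (- rho) powr (2 / 3)) F"
    by (intro tendsto_powr_complex tendsto_const)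
  then have "((\<lambda>x. exterior_to_disk (f x)) \<longlongrightarrow> halfplane_to_disk tau0 tau0) F"
    unfolding exterior_to_disk_def halfplane_to_disk_def minus_rho_powr_two_thirds
    using Re_tau0_pos by (intro tendsto_intros) (auto simp: complex_eq_iff)
  then show ?thesis
    by (simp add: halfplane_to_disk_def)
qed

section \<open>Automorphisms of the punctured disk\<close>

lemma disk_automorphism_fixing_0:
  fixes f :: "complex \<Rightarrow> complex"
  assumes holo: "f holomorphic_on ball 0 1" and inj: "inj_on f (ball 0 1)"
    and onto: "f ` ball 0 1 = ball 0 1" and f0: "f 0 = 0"
  obtains a where "norm a = 1" "\<And>z. z \<in> ball 0 1 \<Longrightarrow> f z = a * z"
proof -
  obtain g where g_holo: "g holomorphic_on f ` ball 0 1"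
    and g_f: "\<And>z. z \<in> ball 0 1 \<Longrightarrow> g (f z) = z"
    using holomorphic_has_inverse[OF holo open_ball inj] by metis
  have f_ball: "\<And>z. norm z < 1 \<Longrightarrow> norm (f z) < 1"
    using onto by auto
  have g_ball: "\<And>y. norm y < 1 \<Longrightarrow> norm (g y) < 1"
    using onto g_f by (metis image_iff mem_ball_0)
  have "g 0 = 0"
    using g_f[of 0] f0 by simp
  define z :: complex where "z = 1 / 2"
  have z: "norm z < 1" "z \<noteq> 0"
    by (simp_all add: z_def norm_divide)
  have "norm (f z) \<le> norm z"
    using Schwarz_Lemma(1)[OF holo f0 f_ball z(1)] .
  moreover have "norm z \<le> norm (f z)"
    using Schwarz_Lemma(1)[of g, OF _ \<open>g 0 = 0\<close> g_ball f_ball[OF z(1)]] g_holo onto g_f z(1)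
    by simp
  ultimately have "norm (f z) = norm z"
    by simp
  then show ?thesis
    using Schwarz_Lemma(3)[OF holo f0 f_ball z(1)] z that by auto
qed

lemma punctured_disk_automorphism:
  fixes f :: "complex \<Rightarrow> complex"
  assumes holo: "f holomorphic_on ball 0 1 - {0}" and inj: "inj_on f (ball 0 1 - {0})"
    and onto: "f ` (ball 0 1 - {0}) = ball 0 1 - {0}" and lim: "(f \<longlongrightarrow> 0) (at 0)"
  obtains a where "norm a = 1" "\<And>z. z \<in> ball 0 1 - {0} \<Longrightarrow> f z = a * z"
proof -
  define h where "h z = (if z = 0 then 0 else f z)" for z
  have h_holo: "h holomorphic_on ball 0 1"
    unfolding h_def using holo lim by (intro removable_singularity) auto
  have "h ` (ball 0 1 - {0}) = f ` (ball 0 1 - {0})"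
    by (simp add: h_def)
  then have image: "h ` (ball 0 1 - {0}) = ball 0 1 - {0}"
    using onto by simp
  then have h_onto: "h ` ball 0 1 = ball 0 1"
    by (metis h_def centre_in_ball image_insert insert_Diff zero_less_one)
  have "inj_on h (ball 0 1 - {0})"
    using inj by (simp add: h_def inj_on_def)
  then have "inj_on h (insert 0 (ball 0 1 - {0}))"
    unfolding inj_on_insert using image by (simp add: h_def)
  then have h_inj: "inj_on h (ball 0 1)"
    by (simp add: insert_absorb)
  obtain a where a: "norm a = 1" and rotation: "\<And>z. z \<in> ball 0 1 \<Longrightarrow> h z = a * z"
    using disk_automorphism_fixing_0[OF h_holo h_inj h_onto] by (auto simp: h_def)
  show ?thesis
  proof (rule that[OF a])
    fix z :: complex assume "z \<in> ball 0 1 - {0}"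
    then show "f z = a * z"
      using rotation[of z] by (simp add: h_def)
  qed
qed

section \<open>Behaviour at the origin\<close>

lemma tendsto_0_of_bigo_power:
  fixes f :: "'a::real_normed_field \<Rightarrow> 'a"
  assumes "f \<in> O[at 0](\<lambda>z. z ^ Suc n)"
  shows "(f \<longlongrightarrow> 0) (at 0)"
proof -
  have "((\<lambda>z. z ^ Suc n / 1) \<longlongrightarrow> 0) (at (0::'a))"
    by (auto intro!: tendsto_eq_intros)
  then have "(\<lambda>z::'a. z ^ Suc n) \<in> o[at 0](\<lambda>_. 1)"
    by (intro smalloI_tendsto) auto
  with assms have "f \<in> o[at 0](\<lambda>_. 1)"
    by (rule landau_o.big_small_trans)
  then show ?thesis
    using smalloD_tendsto by fastforce
qed

lemma tendsto_0_of_smallo_power: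
  fixes f :: "'a::real_normed_field \<Rightarrow> 'a"
  assumes "f \<in> o[at 0](\<lambda>z. z ^ n)"
  shows "(f \<longlongrightarrow> 0) (at 0)"
proof -
  have "(\<lambda>z::'a. z ^ n) \<in> O[at 0](\<lambda>_. 1)"
    by (intro bigoI_tendsto[where c = "0 ^ n"]) (auto intro!: tendsto_eq_intros)
  with assms have "f \<in> o[at 0](\<lambda>_. 1)"
    by (rule landau_o.small_big_trans)
  then show ?thesis
    using smalloD_tendsto by fastforce
qed

lemma coeff_eq_0_of_poly_smallo:
  fixes p :: "'a::real_normed_field poly"
  assumes "poly p \<in> o[at 0](\<lambda>z. z ^ n)" "i \<le> n"
  shows "coeff p i = 0"
  using assms
proof (induction n arbitrary: p i)
  case 0
  have "(poly p \<longlongrightarrow> poly p 0) (at 0)"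
    by (intro tendsto_intros)
  then have "poly p 0 = 0"
    using tendsto_0_of_smallo_power[OF "0.prems"(1)] tendsto_unique[OF at_neq_bot] by blast
  then show ?case
    using "0.prems"(2) by (simp add: poly_0_coeff_0)
next
  case (Suc n)
  have "(poly p \<longlongrightarrow> poly p 0) (at 0)"
    by (intro tendsto_intros)
  then have "coeff p 0 = 0"
    using tendsto_0_of_smallo_power[OF Suc.prems(1)] tendsto_unique[OF at_neq_bot]
    by (simp add: poly_0_coeff_0)
  then obtain q where p: "p = pCons 0 q"
    by (metis pCons_cases coeff_pCons_0)
  have "(\<lambda>z. z * poly q z) \<in> o[at 0](\<lambda>z. z * z ^ n)"
    using Suc.prems(1) by (simp add: p)
  then have "poly q \<in> o[at 0](\<lambda>z. z ^ n)"
    by (subst (asm) landau_o.small.mult_cancel_left) (auto simp: eventually_at_filter)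
  then show ?case
    using Suc.IH Suc.prems(2) p by (cases i) auto
qed

lemma laurent_remainder_bigo:
  fixes g :: "'a::real_normed_field \<Rightarrow> 'a"
  assumes "(\<lambda>z. g z - k / z - c) \<in> O[at 0](\<lambda>z. z)"
  shows "(\<lambda>z. z * g z - k - c * z) \<in> O[at 0](\<lambda>z. z ^ 2)"
proof -
  have "(\<lambda>z. z * (g z - k / z - c)) \<in> O[at 0](\<lambda>z. z * z)"
    using assms by (rule landau_o.big.mult_left)
  moreover have "eventually (\<lambda>z. z * (g z - k / z - c) = z * g z - k - c * z) (at 0)"
    by (auto simp: eventually_at_filter algebra_simps)
  ultimately show ?thesis
    by (simp add: landau_o.big.in_cong power2_eq_square)
qed

lemma laurent_leading_term:
  fixes g :: "'a::real_normed_field \<Rightarrow> 'a"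
  assumes "(\<lambda>z. g z - k / z - c) \<in> O[at 0](\<lambda>z. z)"
  shows "((\<lambda>z. z * g z) \<longlongrightarrow> k) (at 0)"
proof -
  have "((\<lambda>z. z * g z - k - c * z) \<longlongrightarrow> 0) (at 0)"
    using laurent_remainder_bigo[OF assms] tendsto_0_of_bigo_power[of _ 1]
    by (simp add: numeral_2_eq_2)
  then have "((\<lambda>z. k + c * z + (z * g z - k - c * z)) \<longlongrightarrow> k + c * 0 + 0) (at 0)"
    by (intro tendsto_intros)
  then show ?thesis
    by simp
qed

lemma cayley_tendsto_minus_one:
  assumes lim: "((\<lambda>z. z * g z) \<longlongrightarrow> k) (at 0)" and "k \<noteq> 0"
  shows "((\<lambda>z. cayley (g z)) \<longlongrightarrow> -1) (at 0)"
proof -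
  have "((\<lambda>z. (z + z * g z) / (z - z * g z)) \<longlongrightarrow> (0 + k) / (0 - k)) (at 0)"
    using \<open>k \<noteq> 0\<close> by (intro tendsto_intros lim) auto
  moreover have "eventually (\<lambda>z. z \<noteq> 0) (at (0::complex))"
    by (simp add: eventually_at_filter)
  then have "eventually (\<lambda>z. (z + z * g z) / (z - z * g z) = cayley (g z)) (at 0)"
  proof eventually_elim
    case (elim z)
    then have "(z * (1 + g z)) / (z * (1 - g z)) = cayley (g z)"
      by (simp add: cayley_def)
    then show ?case
      by (simp add: algebra_simps)
  qed
  ultimately show ?thesis
    using \<open>k \<noteq> 0\<close> by (simp add: Lim_transform_eventually)
qed

section \<open>The coefficient equations\<close>

(* For v = z w, conformal_relation a z v = 0 is the identity
   disk_to_halfplane tau0 (a z) ^ 3 = - \<i> * cayley w ^ 2 with the denominators cleared;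
   relation_poly a k c is the polynomial z \<mapsto> conformal_relation a z (k + c z). *)
definition conformal_relation :: "complex \<Rightarrow> complex \<Rightarrow> complex \<Rightarrow> complex" where
  "conformal_relation a z v =
     (tau0 + cnj tau0 * a * z) ^ 3 * (z - v) ^ 2 + \<i> * (z + v) ^ 2 * (1 - a * z) ^ 3"

definition relation_poly :: "complex \<Rightarrow> complex \<Rightarrow> complex \<Rightarrow> complex poly" where
  "relation_poly a k c =
     [:tau0, cnj tau0 * a:] ^ 3 * [:- k, 1 - c:] ^ 2 + [:\<i>:] * [:k, 1 + c:] ^ 2 * [:1, - a:] ^ 3"

lemma conformal_relation_split:
  "conformal_relation a z (k + c * z + s) = poly (relation_poly a k c) z
     + s * (\<i> * (1 - a * z) ^ 3 * (2 * (k + (1 + c) * z) + s)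
            - (tau0 + cnj tau0 * a * z) ^ 3 * (2 * ((1 - c) * z - k) - s))"
  unfolding conformal_relation_def relation_poly_def
  by (simp add: algebra_simps power2_eq_square power3_eq_cube)

lemma coeff_relation_poly:
  "coeff (relation_poly a k c) 1 = 4 * \<i> * k - 3 * a * k ^ 2 * (\<i> - tau0)"
  "coeff (relation_poly a k c) 2 = 4 * \<i> * c - 6 * a * k * (tau0 + \<i>)
     - 6 * a * k * c * (\<i> - tau0) + 3 * a ^ 2 * k ^ 2 * (\<i> + cnj tau0)"
proof -
  have "coeff (relation_poly a k c) 1 = 3 * tau0 ^ 2 * cnj tau0 * a * k ^ 2
      - 2 * tau0 ^ 3 * k * (1 - c) + \<i> * (2 * k * (1 + c) - 3 * a * k ^ 2)"
    by (simp add: relation_poly_def power2_eq_square power3_eq_cube algebra_simps)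
  then show "coeff (relation_poly a k c) 1 = 4 * \<i> * k - 3 * a * k ^ 2 * (\<i> - tau0)"
    using tau0_cube tau0_mult_cnj by algebra
  have "coeff (relation_poly a k c) 2 = tau0 ^ 3 * (1 - c) ^ 2
      - 6 * tau0 ^ 2 * cnj tau0 * a * k * (1 - c) + 3 * tau0 * cnj tau0 ^ 2 * a ^ 2 * k ^ 2
      + \<i> * ((1 + c) ^ 2 - 6 * a * k * (1 + c) + 3 * a ^ 2 * k ^ 2)"
    by (simp add: relation_poly_def power2_eq_square power3_eq_cube algebra_simps numeral_2_eq_2)
  then show "coeff (relation_poly a k c) 2 = 4 * \<i> * c - 6 * a * k * (tau0 + \<i>)
     - 6 * a * k * c * (\<i> - tau0) + 3 * a ^ 2 * k ^ 2 * (\<i> + cnj tau0)"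
    using tau0_cube tau0_mult_cnj by algebra
qed

lemma conformal_relation_of_rotation:
  assumes w: "w \<in> half_disk_exterior" and rotation: "exterior_to_disk w = a * z"
  shows "conformal_relation a z (z * w) = 0"
proof -
  have "a * z \<noteq> 1"
    using exterior_to_disk_mem[OF w] rotation by auto
  moreover have "w \<noteq> 1"
    using w by (rule half_disk_exterior_neq_one)
  moreover have "((tau0 + cnj tau0 * (a * z)) / (1 - a * z)) ^ 3 = - \<i> * ((1 + w) / (1 - w)) ^ 2"
    using disk_to_halfplane_exterior_to_disk_cube[OF w]
    by (simp add: rotation disk_to_halfplane_def cayley_def)
  ultimately have "(tau0 + cnj tau0 * a * z) ^ 3 * (1 - w) ^ 2 + \<i> * (1 + w) ^ 2 * (1 - a * z) ^ 3 = 0"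
    by (simp add: power_divide field_simps)
  then have "z ^ 2 * ((tau0 + cnj tau0 * a * z) ^ 3 * (1 - w) ^ 2
      + \<i> * (1 + w) ^ 2 * (1 - a * z) ^ 3) = 0"
    by simp
  then show ?thesis
    unfolding conformal_relation_def by (simp add: algebra_simps power2_eq_square)
qed

(* The limit is 0 because tau0 ^ 3 = - \<i>: the relation has no first-order dependence on v at
   (z, v) = (0, k), so the unknown O(z\<^sup>2) part of z g(z) cannot reach the coefficients of z and z\<^sup>2. *)
lemma relation_correction_tendsto_0:
  fixes s :: "complex \<Rightarrow> complex"
  assumes "(s \<longlongrightarrow> 0) (at 0)"
  shows "((\<lambda>z. \<i> * (1 - a * z) ^ 3 * (2 * (k + (1 + c) * z) + s z)
      - (tau0 + cnj tau0 * a * z) ^ 3 * (2 * ((1 - c) * z - k) - s z)) \<longlongrightarrow> 0) (at 0)"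
proof -
  have "((\<lambda>z. \<i> * (1 - a * z) ^ 3 * (2 * (k + (1 + c) * z) + s z)
      - (tau0 + cnj tau0 * a * z) ^ 3 * (2 * ((1 - c) * z - k) - s z))
      \<longlongrightarrow> \<i> * (1 - a * 0) ^ 3 * (2 * (k + (1 + c) * 0) + 0)
        - (tau0 + cnj tau0 * a * 0) ^ 3 * (2 * ((1 - c) * 0 - k) - 0)) (at 0)"
    by (intro tendsto_intros assms)
  then show ?thesis
    by (simp add: tau0_cube)
qed

lemma relation_poly_smallo:
  assumes remainder: "(\<lambda>z. w z - k - c * z) \<in> O[at 0](\<lambda>z. z ^ 2)"
    and relation: "eventually (\<lambda>z. conformal_relation a z (w z) = 0) (at 0)"
  shows "poly (relation_poly a k c) \<in> o[at 0](\<lambda>z. z ^ 2)"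
proof -
  define s where "s z = w z - k - c * z" for z
  define D where "D z = \<i> * (1 - a * z) ^ 3 * (2 * (k + (1 + c) * z) + s z)
      - (tau0 + cnj tau0 * a * z) ^ 3 * (2 * ((1 - c) * z - k) - s z)" for z
  have s: "s \<in> O[at 0](\<lambda>z. z ^ 2)"
    using remainder by (simp add: s_def [abs_def])
  then have "(s \<longlongrightarrow> 0) (at 0)"
    using tendsto_0_of_bigo_power[of s 1] by (simp add: numeral_2_eq_2)
  then have "(D \<longlongrightarrow> 0) (at 0)"
    unfolding D_def by (rule relation_correction_tendsto_0)
  then have "D \<in> o[at 0](\<lambda>_. 1)"
    by (intro smalloI_tendsto) auto
  from landau_o.big_small_mult[OF s this]
  have small: "(\<lambda>z. - (s z * D z)) \<in> o[at 0](\<lambda>z. z ^ 2)"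
    by simp
  have "eventually (\<lambda>z. - (s z * D z) = poly (relation_poly a k c) z) (at 0)"
    using relation
  proof eventually_elim
    case (elim z)
    then have "conformal_relation a z (k + c * z + s z) = 0"
      by (simp add: s_def)
    then have "poly (relation_poly a k c) z + s z * D z = 0"
      unfolding D_def conformal_relation_split .
    then show ?case
      by (metis add.commute add_eq_0_iff)
  qed
  from landau_o.small.in_cong[OF this] small show ?thesis
    by simp
qed

lemma relation_coeff_1_eq_0_imp:
  fixes a :: complex and \<kappa> :: real
  assumes "\<kappa> > 0" "norm a = 1" "coeff (relation_poly a (of_real \<kappa>) c) 1 = 0"
  shows "\<kappa> = 4 / (3 * sqrt 3)" "a = tau0"
proof -
  define k where "k = complex_of_real \<kappa>"
  have "k \<noteq> 0"
    using assms(1) by (simp add: k_def)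
  have norm_i_tau0: "norm (\<i> - tau0) = sqrt 3"
    by (simp add: tau0_def cmod_def power2_eq_square)
  have "4 * \<i> * k - 3 * a * k ^ 2 * (\<i> - tau0) = 0"
    using assms(3) by (simp only: coeff_relation_poly k_def)
  then have "k * (3 * a * k * (\<i> - tau0)) = k * (4 * \<i>)"
    by (simp add: power2_eq_square algebra_simps)
  then have eq_a: "3 * a * k * (\<i> - tau0) = 4 * \<i>"
    using \<open>k \<noteq> 0\<close> by simp
  then have "norm (3 * a * k * (\<i> - tau0)) = 4"
    by (simp add: norm_mult)
  then have "3 * \<kappa> * sqrt 3 = 4"
    using assms(1,2) norm_i_tau0 by (simp add: norm_mult k_def)
  then show "\<kappa> = 4 / (3 * sqrt 3)"
    by (simp add: field_simps)
  have "tau0 * (\<i> - tau0) = \<i> * sqrt 3"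
    by (simp add: tau0_def complex_eq_iff field_simps)
  then have "3 * tau0 * k * (\<i> - tau0) = \<i> * of_real (3 * \<kappa> * sqrt 3)"
    by (simp add: k_def)
  with eq_a \<open>3 * \<kappa> * sqrt 3 = 4\<close> have "(a - tau0) * (3 * k * (\<i> - tau0)) = 0"
    by (simp add: algebra_simps)
  moreover have "\<i> - tau0 \<noteq> 0"
    using norm_i_tau0 by auto
  ultimately show "a = tau0"
    using \<open>k \<noteq> 0\<close> by simp
qed

lemma relation_coeff_2_eq_0_imp:
  fixes \<kappa> :: real
  assumes kappa: "\<kappa> = 4 / (3 * sqrt 3)" and "coeff (relation_poly tau0 (of_real \<kappa>) c) 2 = 0"
  shows "c = \<i> * of_real (2 / (3 * sqrt 3))"
proof -
  define k where "k = complex_of_real \<kappa>"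
  have "tau0 * (\<i> - tau0) = \<i> * sqrt 3"
    by (simp add: tau0_def complex_eq_iff field_simps)
  then have "3 * tau0 * k * (\<i> - tau0) = \<i> * of_real (3 * \<kappa> * sqrt 3)"
    by (simp add: k_def)
  moreover have "3 * \<kappa> * sqrt 3 = 4"
    using kappa by simp
  ultimately have eq_tau0: "3 * tau0 * k * (\<i> - tau0) = 4 * \<i>"
    by simp
  have "0 = 4 * \<i> * c - 6 * tau0 * k * (tau0 + \<i>) - 2 * c * (3 * tau0 * k * (\<i> - tau0))
      + 3 * tau0 ^ 2 * k ^ 2 * (\<i> + cnj tau0)"
    using assms(2) by (simp only: coeff_relation_poly k_def) (simp add: algebra_simps)
  also have "\<dots> = - 4 * \<i> * c - 6 * k * (tau0 * (tau0 + \<i>)) + 3 * k ^ 2 * (tau0 ^ 2 * (\<i> + cnj tau0))"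
    unfolding eq_tau0 by (simp add: algebra_simps power2_eq_square)
  also have "tau0 * (tau0 + \<i>) = 1"
    by (simp add: tau0_def complex_eq_iff field_simps)
  also have "tau0 ^ 2 * (\<i> + cnj tau0) = sqrt 3"
    by (simp add: tau0_def complex_eq_iff power2_eq_square field_simps)
  finally have "4 * \<i> * c = of_real (3 * sqrt 3 * \<kappa> ^ 2 - 6 * \<kappa>)"
    by (simp add: k_def algebra_simps)
  also have "3 * sqrt 3 * \<kappa> ^ 2 - 6 * \<kappa> = - (8 / (3 * sqrt 3))"
    by (simp add: kappa field_simps power2_eq_square)
  finally have "c = of_real (- (8 / (3 * sqrt 3))) / (4 * \<i>)"
    by (simp add: field_simps)
  also have "\<dots> = \<i> * of_real (2 / (3 * sqrt 3))"
    by (simp add: field_simps)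
  finally show ?thesis .
qed

lemma exterior_to_disk_comp_rotation:
  assumes holo: "g holomorphic_on ball 0 1 - {0}" and inj: "inj_on g (ball 0 1 - {0})"
    and onto: "g ` (ball 0 1 - {0}) = half_disk_exterior"
    and lim: "((\<lambda>z. cayley (g z)) \<longlongrightarrow> -1) (at 0)"
  obtains a where "norm a = 1" "\<And>z. z \<in> ball 0 1 - {0} \<Longrightarrow> exterior_to_disk (g z) = a * z"
proof -
  have "(exterior_to_disk \<circ> g) holomorphic_on ball 0 1 - {0}"
    using holomorphic_on_compose_gen[OF holo holomorphic_exterior_to_disk] onto by blast
  moreover have "bij_betw (exterior_to_disk \<circ> g) (ball 0 1 - {0}) (ball 0 1 - {0})"
    using inj onto bij_betw_exterior_to_disk by (intro bij_betw_trans) (auto simp: bij_betw_def)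
  moreover have "((exterior_to_disk \<circ> g) \<longlongrightarrow> 0) (at 0)"
    using exterior_to_disk_tendsto_0[OF lim] by (simp add: o_def)
  ultimately obtain a where "norm a = 1" "\<And>z. z \<in> ball 0 1 - {0} \<Longrightarrow> (exterior_to_disk \<circ> g) z = a * z"
    by (elim punctured_disk_automorphism) (auto simp: bij_betw_def)
  then show ?thesis
    using that by simp
qed

lemma eventually_conformal_relation:
  assumes onto: "g ` (ball 0 1 - {0}) = half_disk_exterior"
    and rotation: "\<And>z. z \<in> ball 0 1 - {0} \<Longrightarrow> exterior_to_disk (g z) = a * z"
  shows "eventually (\<lambda>z. conformal_relation a z (z * g z) = 0) (at 0)"
proof -
  have "eventually (\<lambda>z. z \<in> ball 0 1 - {0}) (at (0::complex))"
    using eventually_at_ball'[of 1 0 UNIV] by (auto elim!: eventually_mono)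
  then show ?thesis
  proof eventually_elim
    case (elim z)
    then have "g z \<in> half_disk_exterior"
      using onto by blast
    then show ?case
      using rotation[OF elim] by (rule conformal_relation_of_rotation)
  qed
qed

theorem mainTheorem3:
  fixes g :: "complex \<Rightarrow> complex" and \<kappa> :: real and c :: complex
  assumes holo: "g holomorphic_on (ball 0 1 - {0})"
    and inj: "inj_on g (ball 0 1 - {0})"
    and onto: "g ` (ball 0 1 - {0}) = - closure upper_half_disk"
    and kpos: "\<kappa> > 0"
    and expansion: "(\<lambda>z. g z - complex_of_real \<kappa> / z - c) \<in> O[at 0](\<lambda>z. z)"
  shows "\<kappa> = 4 / (3 * sqrt 3) \<and> c = \<i> * complex_of_real (2 / (3 * sqrt 3))"
proof -
  have onto': "g ` (ball 0 1 - {0}) = half_disk_exterior"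
    using onto by (simp add: compl_closure_upper_half_disk)
  have "((\<lambda>z. cayley (g z)) \<longlongrightarrow> -1) (at 0)"
    using kpos by (intro cayley_tendsto_minus_one[OF laurent_leading_term[OF expansion]]) simp
  then obtain a where a: "norm a = 1"
    and rotation: "\<And>z. z \<in> ball 0 1 - {0} \<Longrightarrow> exterior_to_disk (g z) = a * z"
    using exterior_to_disk_comp_rotation[OF holo inj onto'] by blast
  have "poly (relation_poly a (of_real \<kappa>) c) \<in> o[at 0](\<lambda>z. z ^ 2)"
    using laurent_remainder_bigo[OF expansion] eventually_conformal_relation[OF onto' rotation]
    by (rule relation_poly_smallo)
  then have "coeff (relation_poly a (of_real \<kappa>) c) 1 = 0" "coeff (relation_poly a (of_real \<kappa>) c) 2 = 0"
    by (simp_all add: coeff_eq_0_of_poly_smallo)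
  with relation_coeff_1_eq_0_imp[OF kpos a] have "\<kappa> = 4 / (3 * sqrt 3)" "a = tau0"
    by simp_all
  with relation_coeff_2_eq_0_imp show ?thesis
    using \<open>coeff (relation_poly a (of_real \<kappa>) c) 2 = 0\<close> by blast
qed

end
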